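(* Let $P \subseteq \mathbb{R}^7$ be an associative $3$-plane. Then $\Theta(P) \cap \Lambda^2_7 = P\lrcorner\varphi := \{u\lrcorner\varphi : u \in P\}$.
   Context: Equip $\mathbb{R}^7$ with its standard inner product, orientation and basis. Let $\varphi = e_{123} - e_{167} - e_{527} - e_{563} - e_{415} - e_{426} - e_{437}$ ($e_{ijk} = e_i\wedge e_j\wedge e_k$), $\psi = \star\varphi = e_{4567} - e_{4523} - e_{4163} - e_{4127} - e_{2637} - e_{1537} - e_{1526}$, and define $\times$ by $\langle u \times v, w \rangle = \varphi(u,v,w)$. A $3$-dimensional subspace is associative if closed under $\times$. For $u,v$: $u\wedge v$ is the 2-form $(a,b)\mapsto \langle u,a\rangle\langle v,b\rangle - \langle u,b\rangle\langle v,a\rangle$; $u\lrcorner\varphi$ is the 2-form $(a,b)\mapsto \varphi(u,a,b)$; $\Psi_{uv}$ is the 2-form $(a,b)\mapsto\psi(u,v,a,b)$. $\Lambda^2_7 = \{u\lrcorner\varphi : u\in\mathbb{R}^7\}$. $\Theta(P) = \Lambda^2(P)\oplus\Psi(P)$ with $\Lambda^2(P) = \mathrm{Span}\{u\wedge v: u,v\in P\}$, $\Psi(P) = \mathrm{Span}\{\Psi_{uv} : u,v\in P\}$. *)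

theory Defs
  imports "HOL-Analysis.Analysis"
begin

type_synonym vec7 = "real ^ 7"
type_synonym form2 = "vec7 \<Rightarrow> vec7 \<Rightarrow> real"

text \<open>Index i in 1..7 of the standard basis, as an element of the index type 7.\<close>
definition ix :: "nat \<Rightarrow> 7" where "ix i = of_nat (i - 1)"

definition c :: "vec7 \<Rightarrow> nat \<Rightarrow> real" where "c x i = x $ ix i"

text \<open>e_{ijk}(u,v,w) = det of the 3x3 minor (standard convention for wedges of dual basis covectors).\<close>
definition e3 :: "nat \<Rightarrow> nat \<Rightarrow> nat \<Rightarrow> vec7 \<Rightarrow> vec7 \<Rightarrow> vec7 \<Rightarrow> real" where
  "e3 i j k u v w =
     c u i * (c v j * c w k - c v k * c w j)
   - c u j * (c v i * c w k - c v k * c w i)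
   + c u k * (c v i * c w j - c v j * c w i)"

definition e4 :: "nat \<Rightarrow> nat \<Rightarrow> nat \<Rightarrow> nat \<Rightarrow> vec7 \<Rightarrow> vec7 \<Rightarrow> vec7 \<Rightarrow> vec7 \<Rightarrow> real" where
  "e4 i j k l a b d f =
     c a i * e3 j k l b d f - c a j * e3 i k l b d f
   + c a k * e3 i j l b d f - c a l * e3 i j k b d f"

definition phi :: "vec7 \<Rightarrow> vec7 \<Rightarrow> vec7 \<Rightarrow> real" where
  "phi u v w = e3 1 2 3 u v w - e3 1 6 7 u v w - e3 5 2 7 u v w - e3 5 6 3 u v w
             - e3 4 1 5 u v w - e3 4 2 6 u v w - e3 4 3 7 u v w"

definition psi :: "vec7 \<Rightarrow> vec7 \<Rightarrow> vec7 \<Rightarrow> vec7 \<Rightarrow> real" where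
  "psi a b d f = e4 4 5 6 7 a b d f - e4 4 5 2 3 a b d f - e4 4 1 6 3 a b d f
               - e4 4 1 2 7 a b d f - e4 2 6 3 7 a b d f - e4 1 5 3 7 a b d f
               - e4 1 5 2 6 a b d f"

definition cross :: "vec7 \<Rightarrow> vec7 \<Rightarrow> vec7" where
  "cross u v = (\<chi> i. phi u v (axis i 1))"

definition associative :: "vec7 set \<Rightarrow> bool" where
  "associative P \<longleftrightarrow> subspace P \<and> dim P = 3 \<and> (\<forall>u\<in>P. \<forall>v\<in>P. cross u v \<in> P)"

definition wedge :: "vec7 \<Rightarrow> vec7 \<Rightarrow> form2" where
  "wedge u v = (\<lambda>a b. (u \<bullet> a) * (v \<bullet> b) - (u \<bullet> b) * (v \<bullet> a))"

definition hook :: "vec7 \<Rightarrow> form2" where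
  "hook u = (\<lambda>a b. phi u a b)"

definition Psi2 :: "vec7 \<Rightarrow> vec7 \<Rightarrow> form2" where
  "Psi2 u v = (\<lambda>a b. psi u v a b)"

text \<open>A 2-form is identified with its coefficient matrix (bilinear forms on R^7 are
  determined by their values on basis vectors); linear spans are taken there.\<close>
definition fmat :: "form2 \<Rightarrow> real ^ 7 ^ 7" where
  "fmat w = (\<chi> i j. w (axis i 1) (axis j 1))"

definition Lambda2_7 :: "(real ^ 7 ^ 7) set" where
  "Lambda2_7 = {fmat (hook u) | u. True}"

definition Lambda2P :: "vec7 set \<Rightarrow> (real ^ 7 ^ 7) set" where
  "Lambda2P P = span {fmat (wedge u v) | u v. u \<in> P \<and> v \<in> P}"

definition PsiP :: "vec7 set \<Rightarrow> (real ^ 7 ^ 7) set" where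
  "PsiP P = span {fmat (Psi2 u v) | u v. u \<in> P \<and> v \<in> P}"

definition Theta :: "vec7 set \<Rightarrow> (real ^ 7 ^ 7) set" where
  "Theta P = {x + y | x y. x \<in> Lambda2P P \<and> y \<in> PsiP P}"

end

theory Submission
  imports Defs
begin

text \<open>Two identities for the cross product carry the argument:
  \<open>(u \<times> v)\<lrcorner>\<phi> = u \<and> v - \<Psi>\<^sub>u\<^sub>v\<close> and
  \<open>\<psi>(u, v, a, b) = \<langle>u \<times> (v \<times> a) + \<langle>u, v\<rangle> a - \<langle>u, a\<rangle> v, b\<rangle>\<close>.
  For \<open>u \<in> P\<close> pick a nonzero \<open>v \<in> P\<close> orthogonal to \<open>u\<close>; then \<open>u = a \<times> w\<close> with
  \<open>a = -v/|v|\<^sup>2\<close>, \<open>w = v \<times> u \<in> P\<close>, so the first identity puts \<open>u\<lrcorner>\<phi>\<close> into \<open>\<Theta>(P)\<close>.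
  Conversely, closure of \<open>P\<close> under \<open>\<times>\<close> and the second identity show that every form in
  \<open>\<Theta>(P)\<close> vanishes on \<open>P \<times> P\<^sup>\<bottom>\<close>. If \<open>w\<lrcorner>\<phi> \<in> \<Theta>(P)\<close>, split \<open>w = p + q\<close> with
  \<open>p \<in> P\<close>, \<open>q \<bottom> P\<close> and take a nonzero \<open>a \<in> P\<close>: then \<open>b = q \<times> a\<close> is orthogonal to \<open>P\<close>,
  and evaluating \<open>w\<lrcorner>\<phi>\<close> on \<open>(a, b)\<close> gives \<open>|q \<times> a|\<^sup>2 = |q|\<^sup>2 |a|\<^sup>2 = 0\<close>, so \<open>q = 0\<close>.\<close>

lemma exhaust_7:
  fixes x :: 7
  shows "x = 0 \<or> x = 1 \<or> x = 2 \<or> x = 3 \<or> x = 4 \<or> x = 5 \<or> x = 6"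
proof (induct x)
  case (of_int z)
  then have "0 \<le> z" "z < 7" by simp_all
  then have "z = 0 \<or> z = 1 \<or> z = 2 \<or> z = 3 \<or> z = 4 \<or> z = 5 \<or> z = 6" by linarith
  then show ?case by (elim disjE) simp_all
qed

lemma UNIV_7: "(UNIV :: 7 set) = {0, 1, 2, 3, 4, 5, 6}"
  using exhaust_7 by blast

lemma sum_UNIV_7:
  "(\<Sum>i\<in>UNIV. f i) = f (0::7) + (f 1 + (f 2 + (f 3 + (f 4 + (f 5 + (f 6 :: 'a::comm_monoid_add))))))"
  unfolding UNIV_7 by (subst sum.insert, simp, simp)+ simp

lemma inner_vec7:
  "(u::vec7) \<bullet> v = u$0 * v$0 + u$1 * v$1 + u$2 * v$2 + u$3 * v$3 + u$4 * v$4 + u$5 * v$5 + u$6 * v$6"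
  unfolding inner_vec_def sum_UNIV_7 by (simp add: add.assoc)

lemma c_simps:
  "c x 1 = x$0" "c x (Suc 0) = x$0" "c x 2 = x$1" "c x 3 = x$2" "c x 4 = x$3"
  "c x 5 = x$4" "c x 6 = x$5" "c x 7 = x$6"
  by (simp_all add: c_def ix_def)

lemma vec7_eqI:
  fixes x y :: "'a ^ 7"
  assumes "x$0 = y$0" "x$1 = y$1" "x$2 = y$2" "x$3 = y$3" "x$4 = y$4" "x$5 = y$5" "x$6 = y$6"
  shows "x = y"
proof (rule iffD2[OF vec_eq_iff], rule allI)
  fix i :: 7
  from exhaust_7[of i] show "x$i = y$i" by (elim disjE) (simp_all add: assms)
qed

lemma linear_real_eq_inner_axis:
  fixes f :: "real ^ 'n \<Rightarrow> real"
  assumes "linear f"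
  shows "f z = z \<bullet> (\<chi> k. f (axis k 1))"
proof -
  have "f z = f (\<Sum>k\<in>UNIV. z$k *\<^sub>R axis k 1)"
    using basis_expansion[of z] by (simp add: scalar_mult_eq_scaleR)
  also have "\<dots> = (\<Sum>k\<in>UNIV. z$k * f (axis k 1))"
    by (simp add: linear_sum[OF assms] linear_scale[OF assms])
  finally show ?thesis by (simp add: inner_vec_def)
qed

lemma cross_components:
  "cross u v $ 0 = u$1 * v$2 - u$2 * v$1 + u$3 * v$4 - u$4 * v$3 - u$5 * v$6 + u$6 * v$5"
  "cross u v $ 1 = - u$0 * v$2 + u$2 * v$0 + u$3 * v$5 + u$4 * v$6 - u$5 * v$3 - u$6 * v$4"
  "cross u v $ 2 = u$0 * v$1 - u$1 * v$0 + u$3 * v$6 - u$4 * v$5 + u$5 * v$4 - u$6 * v$3"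
  "cross u v $ 3 = - u$0 * v$4 - u$1 * v$5 - u$2 * v$6 + u$4 * v$0 + u$5 * v$1 + u$6 * v$2"
  "cross u v $ 4 = u$0 * v$3 - u$1 * v$6 + u$2 * v$5 - u$3 * v$0 - u$5 * v$2 + u$6 * v$1"
  "cross u v $ 5 = u$0 * v$6 + u$1 * v$3 - u$2 * v$4 - u$3 * v$1 + u$4 * v$2 - u$6 * v$0"
  "cross u v $ 6 = - u$0 * v$5 + u$1 * v$4 + u$2 * v$3 - u$3 * v$2 - u$4 * v$1 + u$5 * v$0"
  by (simp_all add: cross_def phi_def e3_def c_simps axis_def)

lemma phi_eq_inner_cross: "phi u v w = cross u v \<bullet> w"
  unfolding inner_vec7 cross_components by (simp add: phi_def e3_def c_simps algebra_simps)

lemma bilinear_cross: "bilinear cross"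
  unfolding bilinear_def
  by (auto intro!: linearI vec7_eqI simp: cross_components algebra_simps)

lemma cross_antisym: "cross v u = - cross u v"
  by (rule vec7_eqI) (simp_all add: cross_components algebra_simps)

lemma phi_cycle: "phi u v w = phi v w u"
  unfolding phi_eq_inner_cross inner_vec7 cross_components by (simp add: algebra_simps)

lemma cross_cross_self: "cross v (cross v u) = (v \<bullet> u) *\<^sub>R v - (v \<bullet> v) *\<^sub>R u"
  by (rule vec7_eqI) (simp_all add: cross_components inner_vec7 algebra_simps)

lemma cross_cross_add:
  "cross (cross u v) a + cross u (cross v a) = (2 * (u \<bullet> a)) *\<^sub>R v - (v \<bullet> a) *\<^sub>R u - (u \<bullet> v) *\<^sub>R a"
  by (rule vec7_eqI) (simp_all add: cross_components inner_vec7 algebra_simps)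

lemma inner_cross_self:
  "cross u a \<bullet> cross u a = (u \<bullet> u) * (a \<bullet> a) - (u \<bullet> a) * (u \<bullet> a)"
proof -
  have "cross u a \<bullet> cross u a = phi (cross u a) u a"
    using phi_cycle by (metis phi_eq_inner_cross)
  also have "\<dots> = - (cross u (cross u a) \<bullet> a)"
    by (simp add: phi_eq_inner_cross cross_antisym[of u "cross u a"])
  finally show ?thesis
    by (simp add: cross_cross_self inner_diff_right inner_commute)
qed

lemma linear_c: "linear (\<lambda>x. c x i)"
  by (rule linearI) (simp_all add: c_def)

lemma linear_e3: "linear (e3 i j k u v)"
  by (rule linearI) (simp_all add: e3_def linear_add[OF linear_c] linear_scale[OF linear_c] algebra_simps)

lemma linear_e4: "linear (e4 i j k l a b d)"
  by (rule linearI) (simp_all add: e4_def linear_add[OF linear_e3] linear_scale[OF linear_e3] algebra_simps)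

lemma linear_psi: "linear (psi u v w)"
  by (rule linearI) (simp_all add: psi_def linear_add[OF linear_e4] linear_scale[OF linear_e4] algebra_simps)

lemma psi_eq_inner: "psi u v w z = (cross u (cross v w) + (u \<bullet> v) *\<^sub>R w - (u \<bullet> w) *\<^sub>R v) \<bullet> z"
proof -
  have "(\<chi> k. psi u v w (axis k 1)) = cross u (cross v w) + (u \<bullet> v) *\<^sub>R w - (u \<bullet> w) *\<^sub>R v"
    by (rule vec7_eqI)
      (simp_all add: psi_def e4_def e3_def c_simps axis_def cross_components inner_vec7 algebra_simps)
  then show ?thesis
    using linear_real_eq_inner_axis[OF linear_psi[of u v w], of z] by (simp add: inner_commute)
qed

lemma hook_cross: "hook (cross u v) = (\<lambda>x y. wedge u v x y - Psi2 u v x y)"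
proof (intro ext)
  fix x y
  have "hook (cross u v) x y = cross (cross u v) x \<bullet> y"
    by (simp add: hook_def phi_eq_inner_cross)
  also have "cross (cross u v) x = (2 * (u \<bullet> x)) *\<^sub>R v - (v \<bullet> x) *\<^sub>R u - (u \<bullet> v) *\<^sub>R x - cross u (cross v x)"
    using cross_cross_add[of u v x] by (simp add: algebra_simps)
  finally show "hook (cross u v) x y = wedge u v x y - Psi2 u v x y"
    by (simp add: Psi2_def wedge_def psi_eq_inner algebra_simps inner_commute)
qed

lemma bilinearI_real:
  fixes f :: "'a::real_vector \<Rightarrow> 'b::real_vector \<Rightarrow> real"
  assumes "\<And>a a' b. f (a + a') b = f a b + f a' b" "\<And>r a b. f (r *\<^sub>R a) b = r * f a b"
    and "\<And>a b b'. f a (b + b') = f a b + f a b'" "\<And>r a b. f a (r *\<^sub>R b) = r * f a b"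
  shows "bilinear f"
  unfolding bilinear_def by (auto intro!: linearI simp: assms)

lemma bilinear_hook: "bilinear (hook u)"
  by (rule bilinearI_real)
    (simp_all add: hook_def phi_eq_inner_cross bilinear_radd[OF bilinear_cross]
      bilinear_rmul[OF bilinear_cross] inner_add_left inner_add_right)

lemma bilinear_wedge: "bilinear (wedge u v)"
  by (rule bilinearI_real) (simp_all add: wedge_def inner_add_left inner_add_right algebra_simps)

lemma bilinear_Psi2: "bilinear (Psi2 u v)"
  by (rule bilinearI_real)
    (simp_all add: Psi2_def psi_eq_inner bilinear_radd[OF bilinear_cross]
      bilinear_rmul[OF bilinear_cross] algebra_simps)

lemma inner_fmat_mult_vec:
  assumes "bilinear f"
  shows "a \<bullet> (fmat f *v b) = f a b"
proof -
  have "(fmat f *v b) $ i = f (axis i 1) b" for i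
  proof -
    have "linear (f (axis i 1))"
      using assms by (simp add: bilinear_def)
    from linear_real_eq_inner_axis[OF this, of b] show ?thesis
      by (simp add: matrix_vector_mult_def fmat_def inner_vec_def mult.commute)
  qed
  then have "fmat f *v b = (\<chi> i. f (axis i 1) b)"
    by (simp add: vec_eq_iff)
  moreover have "linear (\<lambda>x. f x b)"
    using assms by (simp add: bilinear_def)
  ultimately show ?thesis
    using linear_real_eq_inner_axis[of "\<lambda>x. f x b" a] by simp
qed

lemma fmat_diff: "fmat (\<lambda>x y. f x y - g x y) = fmat f - fmat g"
  unfolding fmat_def by (simp add: vec_eq_iff)

lemma inner_mult_vec_eq_0_on_span:
  fixes M :: "real ^ 'n ^ 'm"
  assumes "M \<in> span S" and "\<And>N. N \<in> S \<Longrightarrow> a \<bullet> (N *v b) = 0"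
  shows "a \<bullet> (M *v b) = 0"
proof -
  have "linear (\<lambda>M :: real ^ 'n ^ 'm. a \<bullet> (M *v b))"
    by (rule linearI)
      (simp_all add: matrix_vector_mult_add_rdistrib inner_add_right scaleR_matrix_vector_assoc[symmetric])
  then show ?thesis
    using real_vector.linear_eq_0_on_span assms by blast
qed

lemma subspace_obtain_orthogonal:
  fixes P :: "'a::euclidean_space set"
  assumes "subspace P" and "dim P \<ge> 2" and "u \<in> P"
  obtains v where "v \<in> P" "v \<noteq> 0" "v \<bullet> u = 0"
proof -
  have "span {u} \<subset> span P"
  proof
    show "span {u} \<subseteq> span P"
      using assms(3) by (simp add: span_mono)
    show "span {u} \<noteq> span P"
    proof
      assume "span {u} = span P"
      then have "dim P = dim {u}"
        by (metis dim_span)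
      with assms(2) show False
        by (simp split: if_splits)
    qed
  qed
  then obtain v where "v \<noteq> 0" "v \<in> span P" "\<And>y. y \<in> span {u} \<Longrightarrow> orthogonal v y"
    by (rule orthogonal_to_subspace_exists_gen) blast
  moreover have "span P = P"
    using assms(1) by (simp add: span_eq_iff)
  ultimately show ?thesis
    using that by (simp add: orthogonal_def span_base)
qed

lemma hook_in_Theta:
  assumes "subspace P" and "dim P \<ge> 2" and closed: "\<And>u v. u \<in> P \<Longrightarrow> v \<in> P \<Longrightarrow> cross u v \<in> P"
    and "u \<in> P"
  shows "fmat (hook u) \<in> Theta P"
proof -
  obtain v where v: "v \<in> P" "v \<noteq> 0" "v \<bullet> u = 0"
    using subspace_obtain_orthogonal assms(1,2,4) by blast
  define a where "a = (- 1 / (v \<bullet> v)) *\<^sub>R v"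
  define w where "w = cross v u"
  have "a \<in> P"
    unfolding a_def using subspace_scale[OF assms(1) \<open>v \<in> P\<close>] .
  have "w \<in> P"
    unfolding w_def using \<open>v \<in> P\<close> \<open>u \<in> P\<close> by (rule closed)
  have "cross a w = (- 1 / (v \<bullet> v)) *\<^sub>R cross v (cross v u)"
    unfolding a_def w_def by (rule bilinear_lmul[OF bilinear_cross])
  also have "\<dots> = u"
    using v by (simp add: cross_cross_self)
  finally have "cross a w = u" .
  then have "fmat (hook u) = fmat (wedge a w) + (- fmat (Psi2 a w))"
    using hook_cross[of a w] by (simp add: fmat_diff)
  moreover have "fmat (wedge a w) \<in> Lambda2P P"
    unfolding Lambda2P_def using \<open>a \<in> P\<close> \<open>w \<in> P\<close> by (intro span_base) blast
  moreover have "- fmat (Psi2 a w) \<in> PsiP P"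
    unfolding PsiP_def using \<open>a \<in> P\<close> \<open>w \<in> P\<close> by (intro span_neg span_base) blast
  ultimately show ?thesis
    unfolding Theta_def by blast
qed

lemma Theta_vanishes_on_orthogonal:
  assumes closed: "\<And>u v. u \<in> P \<Longrightarrow> v \<in> P \<Longrightarrow> cross u v \<in> P"
    and "M \<in> Theta P" and "a \<in> P" and perp: "\<And>p. p \<in> P \<Longrightarrow> p \<bullet> b = 0"
  shows "a \<bullet> (M *v b) = 0"
proof -
  obtain x y where M: "M = x + y" "x \<in> Lambda2P P" "y \<in> PsiP P"
    using assms(2) unfolding Theta_def by blast
  have "a \<bullet> (x *v b) = 0"
    using M(2) unfolding Lambda2P_def
  proof (rule inner_mult_vec_eq_0_on_span)
    fix N assume "N \<in> {fmat (wedge u v) |u v. u \<in> P \<and> v \<in> P}"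
    then obtain u v where "N = fmat (wedge u v)" "u \<in> P" "v \<in> P" by blast
    then have "a \<bullet> (N *v b) = wedge u v a b"
      by (simp add: inner_fmat_mult_vec bilinear_wedge)
    then show "a \<bullet> (N *v b) = 0"
      using \<open>u \<in> P\<close> \<open>v \<in> P\<close> by (simp add: wedge_def perp)
  qed
  moreover have "a \<bullet> (y *v b) = 0"
    using M(3) unfolding PsiP_def
  proof (rule inner_mult_vec_eq_0_on_span)
    fix N assume "N \<in> {fmat (Psi2 u v) |u v. u \<in> P \<and> v \<in> P}"
    then obtain u v where "N = fmat (Psi2 u v)" "u \<in> P" "v \<in> P" by blast
    then have "a \<bullet> (N *v b) = Psi2 u v a b"
      by (simp add: inner_fmat_mult_vec bilinear_Psi2)
    then show "a \<bullet> (N *v b) = 0"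
      using \<open>u \<in> P\<close> \<open>v \<in> P\<close> \<open>a \<in> P\<close>
      by (simp add: Psi2_def psi_eq_inner inner_add_left inner_diff_left perp closed)
  qed
  ultimately show ?thesis
    by (simp add: M(1) matrix_vector_mult_add_rdistrib inner_add_right)
qed

lemma mem_if_hook_in_Theta:
  assumes "subspace P" and closed: "\<And>u v. u \<in> P \<Longrightarrow> v \<in> P \<Longrightarrow> cross u v \<in> P"
    and "a \<in> P" "a \<noteq> 0" and "fmat (hook w) \<in> Theta P"
  shows "w \<in> P"
proof -
  obtain p q where "p \<in> span P" and q: "\<And>x. x \<in> span P \<Longrightarrow> orthogonal q x" and "w = p + q"
    by (rule orthogonal_subspace_decomp_exists[of P w]) blast
  have "p \<in> P"
    using \<open>p \<in> span P\<close> assms(1) by (metis span_eq_iff)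
  have q_perp: "q \<bullet> x = 0" if "x \<in> P" for x
    using q[of x] that by (simp add: orthogonal_def span_base)
  define b where "b = cross q a"
  have b_perp: "x \<bullet> b = 0" if "x \<in> P" for x
  proof -
    have "x \<bullet> b = phi a x q"
      using phi_cycle[of q a x] by (simp add: b_def phi_eq_inner_cross inner_commute)
    also have "\<dots> = 0"
      using q_perp[of "cross a x"] closed \<open>a \<in> P\<close> that by (simp add: phi_eq_inner_cross inner_commute)
    finally show ?thesis .
  qed
  have "phi w a b = 0"
    using Theta_vanishes_on_orthogonal[OF closed assms(5) \<open>a \<in> P\<close> b_perp]
      inner_fmat_mult_vec[OF bilinear_hook[of w]]
    by (simp add: hook_def)
  moreover have "phi p a b = 0"
    using b_perp[of "cross p a"] closed \<open>p \<in> P\<close> \<open>a \<in> P\<close> by (simp add: phi_eq_inner_cross inner_commute)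
  ultimately have "cross q a \<bullet> cross q a = 0"
    using \<open>w = p + q\<close> by (simp add: phi_eq_inner_cross bilinear_ladd[OF bilinear_cross] inner_add_left b_def)
  then have "q = 0"
    using q_perp[of a] \<open>a \<in> P\<close> \<open>a \<noteq> 0\<close> by (simp add: inner_cross_self)
  then show ?thesis
    using \<open>w = p + q\<close> \<open>p \<in> P\<close> by simp
qed

theorem lemma4p9:
  assumes "associative P"
  shows "Theta P \<inter> Lambda2_7 = {fmat (hook u) | u. u \<in> P}"
proof -
  have "subspace P" and "dim P = 3" and closed: "\<And>u v. u \<in> P \<Longrightarrow> v \<in> P \<Longrightarrow> cross u v \<in> P"
    using assms unfolding associative_def by auto
  have "\<not> P \<subseteq> {0}"
  proof
    assume "P \<subseteq> {0}"
    then have "dim P = 0"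
      by simp
    with \<open>dim P = 3\<close> show False
      by simp
  qed
  then obtain a where "a \<in> P" "a \<noteq> 0"
    by blast
  show ?thesis
    unfolding Lambda2_7_def
    using hook_in_Theta[OF \<open>subspace P\<close> _ closed] mem_if_hook_in_Theta[OF \<open>subspace P\<close> closed \<open>a \<in> P\<close> \<open>a \<noteq> 0\<close>]
      \<open>dim P = 3\<close> by auto
qed

end
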